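(* (a) For every finite abelian group $G$, every rate $k/l$ achievable by a $(k,l)$ fractional network code over $G$ on $\mathcal{S}_3$ or on $\mathcal{S}_3'$ satisfies $k/l\le 2/3$. (b) Over every finite field $F$, both the capacity and the linear coding capacity of $\mathcal{S}_3$ and of $\mathcal{S}_3'$ equal $2/3$. (Note that every source-terminal pair in these networks has min-cut at least $1$.)
   Context: The sum-network $\mathcal{S}_3$ has sources $s_1,s_2,s_3$, terminals $t_1,t_2,t_3$, intermediate nodes $u_1,v_1,u_2,v_2$, and the twelve edges $(s_1,u_1),(s_3,u_1),(u_1,v_1),(v_1,t_1),(v_1,t_3),(s_2,u_2),(s_3,u_2),(u_2,v_2),(v_2,t_2),(v_2,t_3),(s_2,t_1),(s_1,t_2)$. The network $\mathcal{S}_3'$ is obtained from $\mathcal{S}_3$ by adding an edge $(s_1,t_1)$, and replacing the edge $(s_2,t_1)$ by a new node $u_3$ with edges $(s_2,u_3),(u_3,t_1)$ and an additional edge $(s_1,u_3)$. A $(k,l)$ fractional network code over alphabet $A$: each source $s_i$ holds $X_i\in A^k$ and sends on each outgoing edge a function $A^k\to A^l$ of $X_i$; each edge whose tail $v$ is not a source carries a function $A^{l|In(v)|}\to A^l$ of the vectors on the incoming edges of $v$; each terminal applies a decoding function $A^{l|In(t)|}\to A^k$. It is a solution if every terminal outputs $X_1+X_2+X_3$ (componentwise sum) for all messages. Rate $k/l$ is achievable if a $(k,l)$ fractional solution exists; the capacity is the supremum of achievable rates; for a field $F$, a code is linear if all functions are $F$-linear and the linear coding capacity is the supremum of rates of linear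 solutions. *)

theory Defs
  imports Complex_Main
begin

datatype node = S1 | S2 | S3 | T1 | T2 | T3 | U1 | V1 | U2 | V2 | U3

type_synonym edge = "node \<times> node"

definition sources :: "node set" where "sources = {S1, S2, S3}"
definition terminals :: "node set" where "terminals = {T1, T2, T3}"

text \<open>Edge lists, written in a topological order (every edge appears after
all incoming edges of its tail).\<close>
definition S3_net :: "edge list" where
  "S3_net = [(S1,U1),(S3,U1),(S2,U2),(S3,U2),(S2,T1),(S1,T2),
             (U1,V1),(U2,V2),(V1,T1),(V1,T3),(V2,T2),(V2,T3)]"

definition S3'_net :: "edge list" where
  "S3'_net = [(S1,U1),(S3,U1),(S2,U2),(S3,U2),(S1,T2),(S1,T1),(S2,U3),(S1,U3),
              (U1,V1),(U2,V2),(U3,T1),(V1,T1),(V1,T3),(V2,T2),(V2,T3)]"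

definition In :: "edge list \<Rightarrow> node \<Rightarrow> edge set" where
  "In E v = {e \<in> set E. snd e = v}"

text \<open>Restriction of an edge assignment to a set of edges (other edges carry []),
so that a local function applied to it depends only on those edges.\<close>
definition restr :: "edge set \<Rightarrow> (edge \<Rightarrow> 'a list) \<Rightarrow> edge \<Rightarrow> 'a list" where
  "restr S y = (\<lambda>e. if e \<in> S then y e else [])"

text \<open>Vectors in A^n are lists of length n; componentwise sum and scaling.\<close>
definition vsum :: "'a::plus list \<Rightarrow> 'a list \<Rightarrow> 'a list" where
  "vsum u v = map2 (+) u v"

definition smul :: "'a::times \<Rightarrow> 'a list \<Rightarrow> 'a list" where
  "smul c u = map ((*) c) u"

text \<open>A network code: encoders at source tails (function of the source message),
local functions at non-source tails (function of the incoming edge vectors),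
decoders at terminals (function of the incoming edge vectors).\<close>
record 'a code =
  enc :: "edge \<Rightarrow> 'a list \<Rightarrow> 'a list"
  loc :: "edge \<Rightarrow> (edge \<Rightarrow> 'a list) \<Rightarrow> 'a list"
  dec :: "node \<Rightarrow> (edge \<Rightarrow> 'a list) \<Rightarrow> 'a list"

definition eval_code :: "edge list \<Rightarrow> 'a code \<Rightarrow> (node \<Rightarrow> 'a list) \<Rightarrow> edge \<Rightarrow> 'a list" where
  "eval_code E c x =
     fold (\<lambda>e y. y(e := (if fst e \<in> sources then enc c e (x (fst e))
                          else loc c e (restr (In E (fst e)) y))))
          E (\<lambda>_. [])"

definition is_solution :: "edge list \<Rightarrow> nat \<Rightarrow> nat \<Rightarrow> 'a::ab_group_add code \<Rightarrow> bool" where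
  "is_solution E k l c \<longleftrightarrow>
     (\<forall>x. (\<forall>s\<in>sources. length (x s) = k) \<longrightarrow>
        (\<forall>e\<in>set E. length (eval_code E c x e) = l) \<and>
        (\<forall>t\<in>terminals. dec c t (restr (In E t) (eval_code E c x))
                         = vsum (vsum (x S1) (x S2)) (x S3)))"

definition lin_list :: "nat \<Rightarrow> nat \<Rightarrow> ('a::field list \<Rightarrow> 'a list) \<Rightarrow> bool" where
  "lin_list n m f \<longleftrightarrow>
     (\<forall>u v c. length u = n \<and> length v = n \<longrightarrow>
        length (f u) = m \<and> f (vsum u v) = vsum (f u) (f v) \<and> f (smul c u) = smul c (f u))"

definition lin_map :: "edge set \<Rightarrow> nat \<Rightarrow> nat \<Rightarrow> ((edge \<Rightarrow> 'a::field list) \<Rightarrow> 'a list) \<Rightarrow> bool" where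
  "lin_map S n m g \<longleftrightarrow>
     (\<forall>y z c. (\<forall>e\<in>S. length (y e) = n \<and> length (z e) = n) \<longrightarrow>
        length (g (restr S y)) = m \<and>
        g (restr S (\<lambda>e. vsum (y e) (z e))) = vsum (g (restr S y)) (g (restr S z)) \<and>
        g (restr S (\<lambda>e. smul c (y e))) = smul c (g (restr S y)))"

definition is_linear_code :: "edge list \<Rightarrow> nat \<Rightarrow> nat \<Rightarrow> 'a::field code \<Rightarrow> bool" where
  "is_linear_code E k l c \<longleftrightarrow>
     (\<forall>e\<in>set E. if fst e \<in> sources then lin_list k l (enc c e)
                else lin_map (In E (fst e)) l l (loc c e)) \<and>
     (\<forall>t\<in>terminals. lin_map (In E t) l k (dec c t))"

definition capacity :: "'a::ab_group_add itself \<Rightarrow> edge list \<Rightarrow> real" where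
  "capacity _ E = Sup {real k / real l | k l. 0 < k \<and> 0 < l \<and>
                        (\<exists>c :: 'a code. is_solution E k l c)}"

definition linear_capacity :: "'a::field itself \<Rightarrow> edge list \<Rightarrow> real" where
  "linear_capacity _ E = Sup {real k / real l | k l. 0 < k \<and> 0 < l \<and>
                        (\<exists>c :: 'a code. is_solution E k l c \<and> is_linear_code E k l c)}"

end

theory Submission
  imports Defs
begin

(* Both networks share a
   "skeleton": the edge u1v1 sees only s1 and s3, the edge u2v2 sees only s2 and s3,
   t3 sees only the two bottleneck edges, t2 sees s1 and the bottleneck u2v2, and t1 sees
   at most s1, s2 and the bottleneck u1v1.  From the sums decoded at t3, t2 (with X1 = 0)
   and t1 (with X2 = 0) one recovers X1, X2, X3 from the pair of bottleneck values, so the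
   map A^(3k) -> A^(2l) they define is injective and |A|^(3k) <= |A|^(2l), i.e. 3k <= 2l.

   Achievability (over any field, even with a linear code): with k = 2, l = 3 and
   messages a, b, d at s1, s2, s3, the node u1 sends (a+d, d_0), u2 sends (b+d, d_1),
   and t3 decodes (a+d) + (b+d) - d. *)


section \<open>Evaluating codes on topologically sorted networks\<close>

fun topo_sorted :: "edge list \<Rightarrow> bool" where
  "topo_sorted [] = True"
| "topo_sorted (e # s) \<longleftrightarrow> e \<notin> set s \<and> (\<forall>e'\<in>set (e # s). snd e' \<noteq> fst e) \<and> topo_sorted s"

lemma topo_sorted_distinct: "topo_sorted E \<Longrightarrow> distinct E"
  by (induction E) auto

lemma topo_sorted_suffix: "topo_sorted (p @ s) \<Longrightarrow> topo_sorted s"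
  by (induction p) auto

lemma topo_sorted_in_edges_before:
  assumes "topo_sorted (p @ e # s)" "e' \<in> In (p @ e # s) (fst e)"
  shows "e' \<in> set p"
  using topo_sorted_suffix[OF assms(1)] assms(2) by (auto simp: In_def)

lemma fold_update_other:
  "e \<notin> set s \<Longrightarrow> fold (\<lambda>e y. y(e := g e y)) s y e = y e"
  by (induction s arbitrary: y) auto

lemma restr_cong: "(\<And>e. e \<in> S \<Longrightarrow> y e = y' e) \<Longrightarrow> restr S y = restr S y'"
  by (auto simp: restr_def)

lemma eval_code_rec:
  assumes "topo_sorted E" "e \<in> set E"
  shows "eval_code E c x e =
           (if fst e \<in> sources then enc c e (x (fst e))
            else loc c e (restr (In E (fst e)) (eval_code E c x)))"
proof -
  define g where "g e y = (if fst e \<in> sources then enc c e (x (fst e))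
                           else loc c e (restr (In E (fst e)) y))" for e y
  define run where "run es = fold (\<lambda>e y. y(e := g e y)) es (\<lambda>_. [])" for es
  obtain p s where E: "E = p @ e # s" using split_list[OF assms(2)] by blast
  have dist: "distinct E" using topo_sorted_distinct[OF assms(1)] .
  have "eval_code E c x = fold (\<lambda>e y. y(e := g e y)) E (\<lambda>_. [])"
    unfolding eval_code_def g_def ..
  hence eval: "eval_code E c x = fold (\<lambda>e y. y(e := g e y)) (e # s) (run p)"
    by (simp add: run_def E)
  have final: "eval_code E c x e' = run p e'" if "e' \<in> set p" for e'
  proof -
    have "e' \<notin> set (e # s)" using that dist by (auto simp: E)
    thus ?thesis unfolding eval by (rule fold_update_other)
  qed
  have "e \<notin> set s" using dist by (simp add: E)
  hence "eval_code E c x e = g e (run p)"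
    unfolding eval by (simp add: fold_update_other)
  also have "restr (In E (fst e)) (run p) = restr (In E (fst e)) (eval_code E c x)"
    using topo_sorted_in_edges_before assms(1) final by (intro restr_cong) (auto simp: E)
  hence "g e (run p) = g e (eval_code E c x)" by (simp add: g_def)
  finally show ?thesis by (simp add: g_def)
qed

lemma eval_source:
  assumes "topo_sorted E" "e \<in> set E" "fst e \<in> sources"
  shows "eval_code E c x e = enc c e (x (fst e))"
  using assms by (simp add: eval_code_rec)

lemma eval_inner_cong:
  assumes "topo_sorted E" "e \<in> set E" "fst e \<notin> sources"
    and "\<And>e'. e' \<in> In E (fst e) \<Longrightarrow> eval_code E c x e' = eval_code E c x' e'"
  shows "eval_code E c x e = eval_code E c x' e"
proof -
  have "restr (In E (fst e)) (eval_code E c x) = restr (In E (fst e)) (eval_code E c x')"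
    using assms(4) by (rule restr_cong)
  thus ?thesis using assms(1-3) by (simp add: eval_code_rec)
qed


definition vectors :: "nat \<Rightarrow> 'a list set" where
  "vectors n = {xs. length xs = n}"

lemma card_vectors: "card (vectors n :: 'a::finite list set) = card (UNIV :: 'a set) ^ n"
  using card_lists_length_eq[of "UNIV :: 'a set" n] by (simp add: vectors_def)

lemma finite_vectors: "finite (vectors n :: 'a::finite list set)"
  using finite_lists_length_eq[of "UNIV :: 'a set" n] by (simp add: vectors_def)

lemma injection_length_bound:
  fixes F :: "'a::finite list \<times> 'a list \<times> 'a list \<Rightarrow> 'a list \<times> 'a list"
  assumes "card (UNIV :: 'a set) \<ge> 2"
    and "inj_on F (vectors k \<times> vectors k \<times> vectors k)"
    and "F ` (vectors k \<times> vectors k \<times> vectors k) \<subseteq> vectors l \<times> vectors l"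
  shows "3 * k \<le> 2 * l"
proof -
  have "card (vectors k \<times> vectors k \<times> vectors k :: ('a list \<times> 'a list \<times> 'a list) set)
        \<le> card (vectors l \<times> vectors l :: ('a list \<times> 'a list) set)"
    using assms(2,3) by (rule card_inj_on_le) (simp add: finite_vectors)
  hence "card (UNIV :: 'a set) ^ (3 * k) \<le> card (UNIV :: 'a set) ^ (2 * l)"
    by (simp add: card_cartesian_product card_vectors numeral_3_eq_3 numeral_2_eq_2
                  power_add[symmetric])
  thus ?thesis using assms(1) power_le_imp_le_exp by (metis Suc_1 Suc_le_lessD)
qed

lemma vsum3_eq_nth:
  assumes "{a, b, d, a', b', d'} \<subseteq> vectors k" "vsum (vsum a b) d = vsum (vsum a' b') d'" "i < k"
  shows "a ! i + b ! i + d ! i = a' ! i + b' ! i + d' ! i"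
proof -
  have "vsum (vsum a b) d ! i = vsum (vsum a' b') d' ! i" by (simp only: assms(2))
  thus ?thesis using assms(1,3) by (simp add: vsum_def vectors_def)
qed

definition zeros :: "nat \<Rightarrow> 'a::zero list" where
  "zeros k = replicate k 0"

lemma zeros_vectors [simp]: "zeros k \<in> vectors k"
  and zeros_nth [simp]: "i < k \<Longrightarrow> zeros k ! i = 0"
  by (simp_all add: zeros_def vectors_def)


section \<open>The algebraic core of the upper bound\<close>

text \<open>Abstract form of the information flow in S3 and S3': w is a function of (a, d), w' a
  function of (b, d); the sum a + b + d is determined by (w, w'), by (a, w') and by
  (a, b, w).  Then (w, w') determines (a, b, d): with a = 0 resp. b = 0 the second and
  third conditions give b + d and a + d, and the three sums determine a, b and d.\<close>
lemma bottleneck_determines_messages: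
  fixes w w' :: "'a::ab_group_add list \<Rightarrow> 'a list \<Rightarrow> 'a list \<Rightarrow> 'b"
  assumes w_indep: "\<And>a b b' d. w a b d = w a b' d"
    and w'_indep: "\<And>a a' b d. w' a b d = w' a' b d"
    and dec3: "\<And>a b d a' b' d'. {a, b, d, a', b', d'} \<subseteq> vectors k \<Longrightarrow>
                 w a b d = w a' b' d' \<Longrightarrow> w' a b d = w' a' b' d' \<Longrightarrow>
                 vsum (vsum a b) d = vsum (vsum a' b') d'"
    and dec2: "\<And>a b d b' d'. {a, b, d, b', d'} \<subseteq> vectors k \<Longrightarrow> w' a b d = w' a b' d' \<Longrightarrow>
                 vsum (vsum a b) d = vsum (vsum a b') d'"
    and dec1: "\<And>a b d d'. {a, b, d, d'} \<subseteq> vectors k \<Longrightarrow> w a b d = w a b d' \<Longrightarrow>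
                 vsum (vsum a b) d = vsum (vsum a b) d'"
    and V: "{a, b, d, a', b', d'} \<subseteq> vectors k"
    and W: "w a b d = w a' b' d'" and W': "w' a b d = w' a' b' d'"
  shows "a = a' \<and> b = b' \<and> d = d'"
proof -
  let ?z = "zeros k :: 'a list"
  have eqI: "u = u'" if "u \<in> vectors k" "u' \<in> vectors k" "\<And>i. i < k \<Longrightarrow> u ! i = u' ! i"
    for u u' :: "'a list"
    using that unfolding vectors_def by (auto intro: nth_equalityI)
  have s3: "vsum (vsum a b) d = vsum (vsum a' b') d'"
    using V W W' by (rule dec3)
  have "w' ?z b d = w' ?z b' d'"
    using W' w'_indep by metis
  hence s2: "vsum (vsum ?z b) d = vsum (vsum ?z b') d'"
    using V by (intro dec2) auto
  have a: "a = a'"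
  proof (rule eqI)
    fix i assume i: "i < k"
    have "a ! i + (b ! i + d ! i) = a' ! i + (b' ! i + d' ! i)"
      using vsum3_eq_nth[OF _ s3 i] V by (simp add: add.assoc)
    moreover have "b ! i + d ! i = b' ! i + d' ! i"
      using vsum3_eq_nth[OF _ s2 i] V i by simp
    ultimately show "a ! i = a' ! i" by simp
  qed (use V in auto)
  have "w a ?z d = w a ?z d'"
    using W w_indep a by metis
  hence s1: "vsum (vsum a ?z) d = vsum (vsum a ?z) d'"
    using V by (intro dec1) auto
  have d: "d = d'"
    using vsum3_eq_nth[of _ _ _ _ _ _ k, OF _ s1] V by (intro eqI) auto
  have "b = b'"
    using vsum3_eq_nth[of _ _ _ _ _ _ k, OF _ s3] V a d by (intro eqI) auto
  with a d show ?thesis by simp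
qed


section \<open>Networks with the skeleton of S3\<close>

definition message :: "'a list \<Rightarrow> 'a list \<Rightarrow> 'a list \<Rightarrow> node \<Rightarrow> 'a list" where
  "message a b d = (\<lambda>n. if n = S1 then a else if n = S2 then b else if n = S3 then d else [])"

lemma message_simps [simp]:
  "message a b d S1 = a" "message a b d S2 = b" "message a b d S3 = d"
  by (simp_all add: message_def)

lemma solution_same_input_same_sum:
  assumes sol: "is_solution E k l c" and "{a, b, d, a', b', d'} \<subseteq> vectors k" "t \<in> terminals"
    and same_input: "restr (In E t) (eval_code E c (message a b d))
                   = restr (In E t) (eval_code E c (message a' b' d'))"
  shows "vsum (vsum a b) d = vsum (vsum a' b') d'"
proof -
  have decodes: "dec c t (restr (In E t) (eval_code E c (message u v w))) = vsum (vsum u v) w"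
    if "{u, v, w} \<subseteq> vectors k" for u v w
    using sol that assms(3) unfolding is_solution_def sources_def vectors_def by auto
  have "vsum (vsum a b) d = dec c t (restr (In E t) (eval_code E c (message a b d)))"
    using assms(2) by (simp add: decodes)
  also have "\<dots> = vsum (vsum a' b') d'"
    using assms(2) by (simp add: same_input decodes)
  finally show ?thesis .
qed

lemma solution_edge_length:
  assumes "is_solution E k l c" "{a, b, d} \<subseteq> vectors k" "e \<in> set E"
  shows "eval_code E c (message a b d) e \<in> vectors l"
  using assms unfolding is_solution_def sources_def vectors_def by auto

text \<open>The part of the topology shared by S3 and S3'; terminal t1 may differ, as long as
  what it sees is determined by the messages of s1, s2 and the value on u1v1.\<close>
locale sum_skeleton =
  fixes E :: "edge list"
  assumes topo: "topo_sorted E"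
    and In_U1: "In E U1 = {(S1,U1), (S3,U1)}" and In_U2: "In E U2 = {(S2,U2), (S3,U2)}"
    and In_V1: "In E V1 = {(U1,V1)}" and In_V2: "In E V2 = {(U2,V2)}"
    and In_T2: "In E T2 = {(S1,T2), (V2,T2)}" and In_T3: "In E T3 = {(V1,T3), (V2,T3)}"
begin

lemma edges:
  "(S1,U1) \<in> set E" "(S3,U1) \<in> set E" "(S2,U2) \<in> set E" "(S3,U2) \<in> set E"
  "(U1,V1) \<in> set E" "(U2,V2) \<in> set E" "(S1,T2) \<in> set E" "(V2,T2) \<in> set E"
  "(V1,T3) \<in> set E" "(V2,T3) \<in> set E"
proof -
  have "In E U1 \<union> In E U2 \<union> In E V1 \<union> In E V2 \<union> In E T2 \<union> In E T3 \<subseteq> set E"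
    by (auto simp: In_def)
  thus "(S1,U1) \<in> set E" "(S3,U1) \<in> set E" "(S2,U2) \<in> set E" "(S3,U2) \<in> set E"
    "(U1,V1) \<in> set E" "(U2,V2) \<in> set E" "(S1,T2) \<in> set E" "(V2,T2) \<in> set E"
    "(V1,T3) \<in> set E" "(V2,T3) \<in> set E"
    unfolding In_U1 In_U2 In_V1 In_V2 In_T2 In_T3 by simp_all
qed

lemma U1V1_cong:
  "x S1 = x' S1 \<Longrightarrow> x S3 = x' S3 \<Longrightarrow> eval_code E c x (U1,V1) = eval_code E c x' (U1,V1)"
  by (rule eval_inner_cong[OF topo]) (auto simp: edges sources_def In_U1 eval_source[OF topo])

lemma U2V2_cong:
  "x S2 = x' S2 \<Longrightarrow> x S3 = x' S3 \<Longrightarrow> eval_code E c x (U2,V2) = eval_code E c x' (U2,V2)"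
  by (rule eval_inner_cong[OF topo]) (auto simp: edges sources_def In_U2 eval_source[OF topo])

lemma V1_out_cong:
  "(V1,t) \<in> set E \<Longrightarrow> eval_code E c x (U1,V1) = eval_code E c x' (U1,V1) \<Longrightarrow>
     eval_code E c x (V1,t) = eval_code E c x' (V1,t)"
  by (rule eval_inner_cong[OF topo]) (auto simp: sources_def In_V1)

lemma V2_out_cong:
  "(V2,t) \<in> set E \<Longrightarrow> eval_code E c x (U2,V2) = eval_code E c x' (U2,V2) \<Longrightarrow>
     eval_code E c x (V2,t) = eval_code E c x' (V2,t)"
  by (rule eval_inner_cong[OF topo]) (auto simp: sources_def In_V2)

lemma T2_input_cong:
  "x S1 = x' S1 \<Longrightarrow> eval_code E c x (U2,V2) = eval_code E c x' (U2,V2) \<Longrightarrow>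
     restr (In E T2) (eval_code E c x) = restr (In E T2) (eval_code E c x')"
  by (rule restr_cong) (auto simp: In_T2 eval_source[OF topo] edges sources_def intro: V2_out_cong)

lemma T3_input_cong:
  "eval_code E c x (U1,V1) = eval_code E c x' (U1,V1) \<Longrightarrow>
   eval_code E c x (U2,V2) = eval_code E c x' (U2,V2) \<Longrightarrow>
     restr (In E T3) (eval_code E c x) = restr (In E T3) (eval_code E c x')"
  by (rule restr_cong) (auto simp: In_T3 edges intro: V1_out_cong V2_out_cong)

lemma bottleneck_injective:
  assumes sol: "is_solution E k l c"
    and T1_input: "\<And>x x'. x S1 = x' S1 \<Longrightarrow> x S2 = x' S2 \<Longrightarrow>
         eval_code E c x (U1,V1) = eval_code E c x' (U1,V1) \<Longrightarrow>
         restr (In E T1) (eval_code E c x) = restr (In E T1) (eval_code E c x')"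
  shows "inj_on (\<lambda>(a, b, d). (eval_code E c (message a b d) (U1,V1),
                               eval_code E c (message a b d) (U2,V2)))
                (vectors k \<times> vectors k \<times> vectors k)"
proof -
  define w where "w a b d = eval_code E c (message a b d) (U1,V1)" for a b d
  define w' where "w' a b d = eval_code E c (message a b d) (U2,V2)" for a b d
  have terminals: "T1 \<in> terminals" "T2 \<in> terminals" "T3 \<in> terminals"
    by (simp_all add: terminals_def)
  have determined: "a = a' \<and> b = b' \<and> d = d'"
    if "{a, b, d, a', b', d'} \<subseteq> vectors k" "w a b d = w a' b' d'" "w' a b d = w' a' b' d'"
    for a b d a' b' d'
  proof (rule bottleneck_determines_messages[where w = w and w' = w', OF _ _ _ _ _ that])
    show "w a b d = w a b' d" for a b b' d unfolding w_def by (rule U1V1_cong) simp_all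
    show "w' a b d = w' a' b d" for a a' b d unfolding w'_def by (rule U2V2_cong) simp_all
    show "vsum (vsum a b) d = vsum (vsum a' b') d'"
      if "{a, b, d, a', b', d'} \<subseteq> vectors k" "w a b d = w a' b' d'" "w' a b d = w' a' b' d'"
      for a b d a' b' d'
      using that by (intro solution_same_input_same_sum[OF sol _ terminals(3)] T3_input_cong)
                    (simp_all add: w_def w'_def)
    show "vsum (vsum a b) d = vsum (vsum a b') d'"
      if "{a, b, d, b', d'} \<subseteq> vectors k" "w' a b d = w' a b' d'" for a b d b' d'
      using that by (intro solution_same_input_same_sum[OF sol _ terminals(2)] T2_input_cong)
                    (simp_all add: w'_def)
    show "vsum (vsum a b) d = vsum (vsum a b) d'"
      if "{a, b, d, d'} \<subseteq> vectors k" "w a b d = w a b d'" for a b d d'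
      using that by (intro solution_same_input_same_sum[OF sol _ terminals(1)] T1_input)
                    (simp_all add: w_def)
  qed
  show ?thesis
    unfolding inj_on_def w_def[symmetric] w'_def[symmetric]
    by (clarsimp, rule determined) auto
qed

theorem rate_bound:
  fixes c :: "'a::{ab_group_add, finite} code"
  assumes card: "card (UNIV :: 'a set) \<ge> 2" and sol: "is_solution E k l c"
    and T1_input: "\<And>x x'. x S1 = x' S1 \<Longrightarrow> x S2 = x' S2 \<Longrightarrow>
         eval_code E c x (U1,V1) = eval_code E c x' (U1,V1) \<Longrightarrow>
         restr (In E T1) (eval_code E c x) = restr (In E T1) (eval_code E c x')"
  shows "3 * k \<le> 2 * l"
proof (rule injection_length_bound[OF card bottleneck_injective[OF sol T1_input]])
  show "(\<lambda>(a, b, d). (eval_code E c (message a b d) (U1,V1), eval_code E c (message a b d) (U2,V2)))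
          ` (vectors k \<times> vectors k \<times> vectors k) \<subseteq> vectors l \<times> vectors l"
    using solution_edge_length[OF sol] edges by auto
qed

end



lemma S3_topo: "topo_sorted S3_net" and S3'_topo: "topo_sorted S3'_net"
  by (simp_all add: S3_net_def S3'_net_def)

lemma S3_set: "set S3_net = {(S1,U1),(S3,U1),(S2,U2),(S3,U2),(S2,T1),(S1,T2),
                             (U1,V1),(U2,V2),(V1,T1),(V1,T3),(V2,T2),(V2,T3)}"
  by (simp add: S3_net_def)

lemma S3'_set: "set S3'_net = {(S1,U1),(S3,U1),(S2,U2),(S3,U2),(S1,T2),(S1,T1),(S2,U3),(S1,U3),
                               (U1,V1),(U2,V2),(U3,T1),(V1,T1),(V1,T3),(V2,T2),(V2,T3)}"
  by (simp add: S3'_net_def)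

lemma S3_In:
  "In S3_net U1 = {(S1,U1),(S3,U1)}" "In S3_net U2 = {(S2,U2),(S3,U2)}"
  "In S3_net V1 = {(U1,V1)}" "In S3_net V2 = {(U2,V2)}"
  "In S3_net T1 = {(S2,T1),(V1,T1)}" "In S3_net T2 = {(S1,T2),(V2,T2)}"
  "In S3_net T3 = {(V1,T3),(V2,T3)}"
  by (auto simp: In_def S3_net_def)

lemma S3'_In:
  "In S3'_net U1 = {(S1,U1),(S3,U1)}" "In S3'_net U2 = {(S2,U2),(S3,U2)}"
  "In S3'_net U3 = {(S2,U3),(S1,U3)}"
  "In S3'_net V1 = {(U1,V1)}" "In S3'_net V2 = {(U2,V2)}"
  "In S3'_net T1 = {(S1,T1),(U3,T1),(V1,T1)}" "In S3'_net T2 = {(S1,T2),(V2,T2)}"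
  "In S3'_net T3 = {(V1,T3),(V2,T3)}"
  by (auto simp: In_def S3'_net_def)

interpretation S3: sum_skeleton S3_net
  using S3_topo S3_In by unfold_locales

interpretation S3': sum_skeleton S3'_net
  using S3'_topo S3'_In by unfold_locales

text \<open>In S3, terminal t1 sees the message of s2 and the bottleneck u1v1 (through v1).\<close>
lemma S3_rate_bound:
  fixes c :: "'a::{ab_group_add, finite} code"
  assumes "card (UNIV :: 'a set) \<ge> 2" "is_solution S3_net k l c"
  shows "3 * k \<le> 2 * l"
proof (rule S3.rate_bound[OF assms])
  fix x x' :: "node \<Rightarrow> 'a list"
  assume "x S1 = x' S1" and S2: "x S2 = x' S2"
    and U1V1: "eval_code S3_net c x (U1,V1) = eval_code S3_net c x' (U1,V1)"
  have "eval_code S3_net c x (V1,T1) = eval_code S3_net c x' (V1,T1)"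
    using U1V1 by (rule S3.V1_out_cong[rotated]) (simp add: S3_set)
  thus "restr (In S3_net T1) (eval_code S3_net c x) = restr (In S3_net T1) (eval_code S3_net c x')"
    by (intro restr_cong) (auto simp: S3_In S3_set eval_source[OF S3_topo] sources_def S2)
qed

text \<open>In S3', terminal t1 additionally sees s1 directly and, through u3, a function of
  the messages of s1 and s2.\<close>
lemma S3'_rate_bound:
  fixes c :: "'a::{ab_group_add, finite} code"
  assumes "card (UNIV :: 'a set) \<ge> 2" "is_solution S3'_net k l c"
  shows "3 * k \<le> 2 * l"
proof (rule S3'.rate_bound[OF assms])
  fix x x' :: "node \<Rightarrow> 'a list"
  assume S1: "x S1 = x' S1" and S2: "x S2 = x' S2"
    and U1V1: "eval_code S3'_net c x (U1,V1) = eval_code S3'_net c x' (U1,V1)"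
  have "eval_code S3'_net c x (V1,T1) = eval_code S3'_net c x' (V1,T1)"
    using U1V1 by (rule S3'.V1_out_cong[rotated]) (simp add: S3'_set)
  moreover have "eval_code S3'_net c x (U3,T1) = eval_code S3'_net c x' (U3,T1)"
    by (rule eval_inner_cong[OF S3'_topo])
       (auto simp: S3'_set S3'_In sources_def eval_source[OF S3'_topo] S1 S2)
  ultimately show "restr (In S3'_net T1) (eval_code S3'_net c x)
                    = restr (In S3'_net T1) (eval_code S3'_net c x')"
    by (intro restr_cong) (auto simp: S3'_In S3'_set eval_source[OF S3'_topo] sources_def S1)
qed


section \<open>Achieving rate 2/3\<close>

definition pad :: "'a::zero list \<Rightarrow> 'a list" where
  "pad u = [u ! 0, u ! 1, 0]"

text \<open>The (2,3) code, for messages a, b, d of s1, s2, s3: u1 sends (a + d, d_0), u2 sends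
  (b + d, d_1), the nodes v1, v2 (and u3 in S3') forward what they receive.  Terminal t1
  adds b, received on edge r (from s2 in S3, from u3 in S3'), to a + d; t2 adds a to b + d;
  t3 computes (a + d) + (b + d) - d from the two bottleneck values.\<close>
definition two_thirds_code :: "edge \<Rightarrow> 'a::ab_group_add code" where
  "two_thirds_code r =
     \<lparr>enc = (\<lambda>e u. pad u),
      loc = (\<lambda>e y.
        if e = (U1,V1)
        then [y (S1,U1) ! 0 + y (S3,U1) ! 0, y (S1,U1) ! 1 + y (S3,U1) ! 1, y (S3,U1) ! 0]
        else if e = (U2,V2)
        then [y (S2,U2) ! 0 + y (S3,U2) ! 0, y (S2,U2) ! 1 + y (S3,U2) ! 1, y (S3,U2) ! 1]
        else if fst e = V1 then y (U1,V1)
        else if fst e = V2 then y (U2,V2)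
        else y (S2,U3)),
      dec = (\<lambda>t y.
        if t = T1 then [y r ! 0 + y (V1,T1) ! 0, y r ! 1 + y (V1,T1) ! 1]
        else if t = T2 then [y (S1,T2) ! 0 + y (V2,T2) ! 0, y (S1,T2) ! 1 + y (V2,T2) ! 1]
        else [y (V1,T3) ! 0 + y (V2,T3) ! 0 - y (V1,T3) ! 2,
              y (V1,T3) ! 1 + y (V2,T3) ! 1 - y (V2,T3) ! 2])\<rparr>"

lemma length_2_cases: "length u = 2 \<Longrightarrow> \<exists>u0 u1. u = [u0, u1]"
  by (cases u; cases "tl u") auto

lemma messages_of_length_2:
  assumes "\<forall>s\<in>sources. length (x s) = 2"
  obtains a0 a1 b0 b1 d0 d1 where "x S1 = [a0, a1]" "x S2 = [b0, b1]" "x S3 = [d0, d1]"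
  using assms length_2_cases by (metis insertCI sources_def)

lemma S3_two_thirds: "is_solution S3_net 2 3 (two_thirds_code (S2,T1))"
  unfolding is_solution_def
proof (intro allI impI conjI)
  fix x :: "node \<Rightarrow> 'a list" assume "\<forall>s\<in>sources. length (x s) = 2"
  then obtain a0 a1 b0 b1 d0 d1 where x: "x S1 = [a0,a1]" "x S2 = [b0,b1]" "x S3 = [d0,d1]"
    by (rule messages_of_length_2)
  note eval = eval_code_rec[OF S3_topo]
  show "\<forall>e\<in>set S3_net. length (eval_code S3_net (two_thirds_code (S2,T1)) x e) = 3"
    by (simp add: S3_set S3_In eval two_thirds_code_def pad_def restr_def sources_def)
  show "\<forall>t\<in>terminals. dec (two_thirds_code (S2,T1)) t
           (restr (In S3_net t) (eval_code S3_net (two_thirds_code (S2,T1)) x))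
         = vsum (vsum (x S1) (x S2)) (x S3)"
    by (simp add: terminals_def S3_set S3_In eval two_thirds_code_def pad_def restr_def
                  sources_def x vsum_def algebra_simps)
qed

lemma S3'_two_thirds: "is_solution S3'_net 2 3 (two_thirds_code (U3,T1))"
  unfolding is_solution_def
proof (intro allI impI conjI)
  fix x :: "node \<Rightarrow> 'a list" assume "\<forall>s\<in>sources. length (x s) = 2"
  then obtain a0 a1 b0 b1 d0 d1 where x: "x S1 = [a0,a1]" "x S2 = [b0,b1]" "x S3 = [d0,d1]"
    by (rule messages_of_length_2)
  note eval = eval_code_rec[OF S3'_topo]
  show "\<forall>e\<in>set S3'_net. length (eval_code S3'_net (two_thirds_code (U3,T1)) x e) = 3"
    by (simp add: S3'_set S3'_In eval two_thirds_code_def pad_def restr_def sources_def)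
  show "\<forall>t\<in>terminals. dec (two_thirds_code (U3,T1)) t
           (restr (In S3'_net t) (eval_code S3'_net (two_thirds_code (U3,T1)) x))
         = vsum (vsum (x S1) (x S2)) (x S3)"
    by (simp add: terminals_def S3'_set S3'_In eval two_thirds_code_def pad_def restr_def
                  sources_def x vsum_def algebra_simps)
qed

text \<open>Over a field the code is linear: every function is a linear combination of coordinates.\<close>
lemma pad_linear: "lin_list 2 3 (pad :: 'a::field list \<Rightarrow> 'a list)"
  unfolding lin_list_def
proof (intro allI impI)
  fix u v :: "'a list" and c assume "length u = 2 \<and> length v = 2"
  then obtain u0 u1 v0 v1 where "u = [u0,u1]" "v = [v0,v1]" using length_2_cases by blast
  thus "length (pad u) = 3 \<and> pad (vsum u v) = vsum (pad u) (pad v) \<and>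
        pad (smul c u) = smul c (pad u)"
    by (simp add: pad_def vsum_def smul_def)
qed

lemma S3_two_thirds_linear: "is_linear_code S3_net 2 3 (two_thirds_code (S2,T1) :: 'a::field code)"
  unfolding is_linear_code_def
  by (auto simp: S3_set S3_In sources_def terminals_def two_thirds_code_def pad_linear
                 lin_map_def restr_def vsum_def smul_def algebra_simps)

lemma S3'_two_thirds_linear: "is_linear_code S3'_net 2 3 (two_thirds_code (U3,T1) :: 'a::field code)"
  unfolding is_linear_code_def
  by (auto simp: S3'_set S3'_In sources_def terminals_def two_thirds_code_def pad_linear
                 lin_map_def restr_def vsum_def smul_def algebra_simps)


lemma rate_upper_bound:
  fixes c :: "'a::{ab_group_add, finite} code"
  assumes "card (UNIV :: 'a set) \<ge> 2" "E \<in> {S3_net, S3'_net}" "is_solution E k l c"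
  shows "3 * k \<le> 2 * l"
  using assms S3_rate_bound S3'_rate_bound by blast

lemma two_thirds_achievable:
  assumes "E \<in> {S3_net, S3'_net}"
  shows "\<exists>c :: 'a::field code. is_solution E 2 3 c \<and> is_linear_code E 2 3 c"
  using assms S3_two_thirds S3_two_thirds_linear S3'_two_thirds S3'_two_thirds_linear by blast

lemma rate_le_two_thirds: "3 * k \<le> 2 * l \<Longrightarrow> 0 < l \<Longrightarrow> real k / real l \<le> 2 / 3"
  by (simp add: field_simps)

lemma Sup_rates_eq_two_thirds:
  assumes "P 2 3" and "\<And>k l. 0 < l \<Longrightarrow> P k l \<Longrightarrow> 3 * k \<le> 2 * l"
  shows "Sup {real k / real l | k l. 0 < k \<and> 0 < l \<and> P k l} = 2 / 3"
proof (rule cSup_eq_maximum)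
  show "2 / 3 \<in> {real k / real l | k l. 0 < k \<and> 0 < l \<and> P k l}"
    using assms(1) by (intro CollectI exI[of _ 2] exI[of _ 3]) auto
qed (use assms(2) rate_le_two_thirds in blast)

lemma card_finite_field: "card (UNIV :: 'a::{field, finite} set) \<ge> 2"
proof -
  have "card {0 :: 'a, 1} = 2" by simp
  thus ?thesis by (metis card_mono finite subset_UNIV)
qed

theorem mainTheorem5:
  assumes "card (UNIV :: ('a::{ab_group_add, finite}) set) \<ge> 2"
  shows "(\<forall>E \<in> {S3_net, S3'_net}. \<forall>k l. 0 < l \<longrightarrow>
            (\<exists>c :: 'a code. is_solution E k l c) \<longrightarrow> real k / real l \<le> 2 / 3)
       \<and> (\<forall>E \<in> {S3_net, S3'_net}.
            capacity TYPE('b::{field, finite}) E = 2 / 3 \<and>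
            linear_capacity TYPE('b) E = 2 / 3)"
proof (intro conjI ballI allI impI)
  fix E k l assume "E \<in> {S3_net, S3'_net}" "0 < l" "\<exists>c :: 'a code. is_solution E k l c"
  thus "real k / real l \<le> 2 / 3"
    using rate_upper_bound[OF assms] rate_le_two_thirds by blast
next
  fix E assume E: "E \<in> {S3_net, S3'_net}"
  note upper = rate_upper_bound[OF card_finite_field E]
  obtain c :: "'b code" where c: "is_solution E 2 3 c" "is_linear_code E 2 3 c"
    using two_thirds_achievable[OF E] by blast
  show "capacity TYPE('b) E = 2 / 3"
    unfolding capacity_def by (rule Sup_rates_eq_two_thirds) (use c upper in auto)
  show "linear_capacity TYPE('b) E = 2 / 3"
    unfolding linear_capacity_def by (rule Sup_rates_eq_two_thirds) (use c upper in auto)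
qed

end
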